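(* Assume the $abc$-conjecture. Then there is an absolute constant $C>0$ such that for every real $x > C$ and every real $y$ with $1 \le y \le x^{0.2}$, there do not exist squarefull integers $n_1<n_2<n_3$ in the interval $(x, x+y]$ with $n_1+n_3 = 2n_2$ (i.e. the squarefull numbers in $(x,x+y]$ contain no non-trivial three-term arithmetic progression).
   Context: A positive integer $n$ is squarefull if every prime $p$ dividing $n$ satisfies $p^2\mid n$. For a nonzero integer $m$, $\kappa(m)=\prod_{p\mid m} p$. The $abc$-conjecture is the statement: for every $\epsilon>0$ there is a constant $C_\epsilon>0$ such that for all integers $a,b,c$ with $a+b=c$ and $\gcd(a,b)=1$, one has $\max\{|a|,|b|,|c|\} \le C_\epsilon\, \kappa(abc)^{1+\epsilon}$. *)

theory Defs
  imports "HOL-Computational_Algebra.Primes" Complex_Main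
begin

definition squarefull :: "nat \<Rightarrow> bool" where
  "squarefull n \<longleftrightarrow> n > 0 \<and> (\<forall>p. prime p \<and> p dvd n \<longrightarrow> p^2 dvd n)"

definition kappa :: "int \<Rightarrow> int" where
  "kappa m = (\<Prod>p\<in>prime_factors m. p)"

definition abc_conjecture :: bool where
  "abc_conjecture \<longleftrightarrow>
     (\<forall>\<epsilon>::real. \<epsilon> > 0 \<longrightarrow> (\<exists>C::real. C > 0 \<and>
        (\<forall>a b c :: int. a + b = c \<longrightarrow> gcd a b = 1 \<longrightarrow>
           real_of_int (max \<bar>a\<bar> (max \<bar>b\<bar> \<bar>c\<bar>)) \<le> C * (real_of_int (kappa (a*b*c))) powr (1 + \<epsilon>))))"

end

theory Submission
  imports Defs
begin

text \<open>For a three-term progression \<open>n\<^sub>1 < n\<^sub>2 < n\<^sub>3\<close> with common difference \<open>d\<close> one has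
  \<open>n\<^sub>1 n\<^sub>3 + d\<^sup>2 = n\<^sub>2\<^sup>2\<close>. Applying the \<open>abc\<close>-conjecture to this sum (after dividing out
  common factors) bounds \<open>n\<^sub>2\<^sup>2\<close> by roughly \<open>(\<kappa>(n\<^sub>1) \<kappa>(n\<^sub>2) \<kappa>(n\<^sub>3) d\<^sup>2)\<^bsup>1+\<epsilon>\<^esup>\<close>.
  Squarefull numbers satisfy \<open>\<kappa>(n)\<^sup>2 \<le> n\<close>, so in the window \<open>(x, x + x\<^bsup>1/5\<^esup>]\<close> the right-hand
  side is at most about \<open>(x\<^bsup>3/2\<^esup> x\<^bsup>2/5\<^esup>)\<^bsup>1+\<epsilon>\<^esup> = x\<^bsup>19(1+\<epsilon>)/10\<^esup>\<close>, while the left-hand side exceeds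
  \<open>x\<^sup>2\<close>. With \<open>\<epsilon> = 1/38\<close> this is impossible once \<open>x\<close> is large.\<close>

lemma prime_factor_ge_1: "p \<in> prime_factors (m :: int) \<Longrightarrow> 1 \<le> p"
  using in_prime_factors_imp_prime prime_gt_1_int by fastforce

lemma kappa_ge_1: "kappa m \<ge> 1"
  unfolding kappa_def by (rule prod_ge_1) (auto dest: prime_factor_ge_1)

lemma kappa_nonneg [simp]: "0 \<le> kappa m"
  using kappa_ge_1 by (rule order_trans[OF zero_le_one])

lemma prod_prime_powers_dvd:
  fixes m :: int
  assumes "finite S" "\<forall>p\<in>S. prime p \<and> p ^ k dvd m"
  shows "(\<Prod>p\<in>S. p ^ k) dvd m"
  using assms
proof (induction S rule: finite_induct)
  case empty
  then show ?case by simp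
next
  case (insert p S)
  have "\<forall>q\<in>S. coprime p q"
    using insert by (metis insert_iff primes_coprime)
  then have "coprime (p ^ k) (\<Prod>q\<in>S. q ^ k)"
    by (simp add: prod_coprime_right)
  with insert show ?case by (simp add: divides_mult)
qed

lemma kappa_dvd: "m \<noteq> 0 \<Longrightarrow> kappa m dvd m"
  unfolding kappa_def using prod_prime_powers_dvd[of "prime_factors m" 1 m] by auto

lemma kappa_le_abs: "m \<noteq> 0 \<Longrightarrow> kappa m \<le> \<bar>m\<bar>"
  using dvd_imp_le_int[OF _ kappa_dvd] by fastforce

lemma kappa_dvd_mono: "b \<noteq> 0 \<Longrightarrow> a dvd b \<Longrightarrow> kappa a \<le> kappa b"
  unfolding kappa_def
  by (rule prod_mono2) (auto dest: dvd_prime_factors prime_factor_ge_1)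

lemma kappa_mult_le: "a \<noteq> 0 \<Longrightarrow> b \<noteq> 0 \<Longrightarrow> kappa (a * b) \<le> kappa a * kappa b"
proof -
  assume a: "a \<noteq> 0" and b: "b \<noteq> 0"
  let ?U = "prime_factors a \<union> prime_factors b" and ?I = "prime_factors a \<inter> prime_factors b"
  have "kappa (a * b) = (\<Prod>p\<in>?U. p)"
    unfolding kappa_def using a b by (simp add: prime_factors_product)
  also have "\<dots> \<le> (\<Prod>p\<in>?U. p) * (\<Prod>p\<in>?I. p)"
  proof -
    have "1 \<le> (\<Prod>p\<in>?I. p)" and "0 \<le> (\<Prod>p\<in>?U. p)"
      by (auto intro!: prod_ge_1 prod_nonneg dest: prime_factor_ge_1)
    then show ?thesis by (simp add: mult_le_cancel_left1)
  qed
  also have "\<dots> = kappa a * kappa b"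
    unfolding kappa_def by (rule prod.union_inter) auto
  finally show ?thesis .
qed

lemma kappa_power2 [simp]: "kappa (x ^ 2) = kappa x"
  by (cases "x = 0") (simp_all add: kappa_def power2_eq_square prime_factors_product)

lemma squarefull_int_prime_dvd:
  assumes "squarefull n" "prime (p :: int)" "p dvd int n"
  shows "p ^ 2 dvd int n"
proof -
  obtain q where q: "p = int q"
    using assms(2) prime_ge_0_int zero_le_imp_eq_int by blast
  have "q ^ 2 dvd n"
    using assms unfolding squarefull_def q by simp
  then show ?thesis
    unfolding q by (metis of_nat_dvd_iff of_nat_power)
qed

lemma squarefull_kappa_square_le:
  assumes "squarefull n"
  shows "kappa (int n) ^ 2 \<le> int n"
proof -
  have n: "n > 0"
    using assms by (simp add: squarefull_def)
  have "(\<Prod>p\<in>prime_factors (int n). p ^ 2) dvd int n"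
    using squarefull_int_prime_dvd[OF assms] by (intro prod_prime_powers_dvd) auto
  then have "kappa (int n) ^ 2 dvd int n"
    unfolding kappa_def by (simp add: prod_power_distrib)
  then show ?thesis
    using n by (intro zdvd_imp_le) auto
qed

definition abc_holds_with :: "real \<Rightarrow> real \<Rightarrow> bool" where
  "abc_holds_with \<epsilon> K \<longleftrightarrow>
     (\<forall>a b c :: int. a + b = c \<longrightarrow> gcd a b = 1 \<longrightarrow>
        real_of_int (max \<bar>a\<bar> (max \<bar>b\<bar> \<bar>c\<bar>)) \<le> K * real_of_int (kappa (a * b * c)) powr (1 + \<epsilon>))"

lemma abc_conjecture_iff: "abc_conjecture \<longleftrightarrow> (\<forall>\<epsilon>>0. \<exists>K>0. abc_holds_with \<epsilon> K)"
  by (simp add: abc_conjecture_def abc_holds_with_def)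

text \<open>The common factor \<open>g = gcd a b\<close> is absorbed into \<open>b\<close>, using \<open>g \<le> g\<^bsup>1+\<epsilon>\<^esup>\<close>.\<close>
lemma abc_holds_with_not_coprime:
  fixes a b c :: int
  assumes abc: "abc_holds_with \<epsilon> K" and \<epsilon>: "0 \<le> \<epsilon>" and K: "0 \<le> K"
    and pos: "0 < a" "0 < b" and sum: "a + b = c"
  shows "real_of_int c \<le> K * real_of_int (kappa a * b * kappa c) powr (1 + \<epsilon>)"
proof -
  define g where "g = gcd a b"
  define A B C where "A = a div g" and "B = b div g" and "C = c div g"
  have g: "0 < g"
    unfolding g_def using pos by simp
  have a: "a = g * A" and b: "b = g * B"
    unfolding A_def B_def g_def by simp_all
  have c: "c = g * C" and ABC: "A + B = C"
    using sum g unfolding a b C_def by (auto simp: algebra_simps)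
  have A: "0 < A" and B: "0 < B" and C: "0 < C"
    using pos g ABC unfolding a b by (auto simp: zero_less_mult_iff)
  have "coprime A B"
    unfolding A_def B_def g_def using pos by (intro div_gcd_coprime) auto
  then have "gcd A B = 1"
    by simp
  note abc[unfolded abc_holds_with_def, rule_format, OF ABC this]
  then have "real_of_int C \<le> K * real_of_int (kappa (A * B * C)) powr (1 + \<epsilon>)"
    by linarith
  also have "\<dots> \<le> K * real_of_int (kappa a * B * kappa c) powr (1 + \<epsilon>)"
  proof -
    have "kappa (A * B * C) \<le> kappa (A * B) * kappa C"
      using A B C by (intro kappa_mult_le) auto
    also have "\<dots> \<le> kappa A * kappa B * kappa C"
      using A B by (intro mult_right_mono kappa_mult_le) auto
    also have "\<dots> \<le> kappa a * B * kappa c"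
      using A B C g kappa_le_abs[of B] by (intro mult_mono kappa_dvd_mono) (auto simp: a c)
    finally have "real_of_int (kappa (A * B * C)) \<le> real_of_int (kappa a * B * kappa c)"
      by linarith
    then show ?thesis
      using K \<epsilon> by (intro mult_left_mono powr_mono2) auto
  qed
  finally have "real_of_int c \<le> g * (K * real_of_int (kappa a * B * kappa c) powr (1 + \<epsilon>))"
    using g unfolding c by (simp add: mult_left_mono)
  also have "\<dots> \<le> K * (g powr (1 + \<epsilon>) * real_of_int (kappa a * B * kappa c) powr (1 + \<epsilon>))"
  proof -
    have "real_of_int g \<le> g powr (1 + \<epsilon>)"
      using powr_mono[of 1 "1 + \<epsilon>" "real_of_int g"] g \<epsilon> by simp
    then show ?thesis
      using K by (simp add: mult_right_mono mult.left_commute mult_left_mono)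
  qed
  also have "\<dots> = K * real_of_int (kappa a * b * kappa c) powr (1 + \<epsilon>)"
    using g B unfolding b by (simp add: powr_mult[symmetric] algebra_simps)
  finally show ?thesis .
qed

lemma squarefull_kappa_le_sqrt:
  assumes "squarefull n"
  shows "real_of_int (kappa (int n)) \<le> sqrt (real n)"
proof (rule real_le_rsqrt)
  show "real_of_int (kappa (int n)) ^ 2 \<le> real n"
    using squarefull_kappa_square_le[OF assms] by (metis of_int_le_iff of_int_of_nat_eq of_int_power)
qed

lemma squarefull_progression_abc_bound:
  fixes n1 n2 n3 :: nat
  assumes abc: "abc_holds_with \<epsilon> K" and \<epsilon>: "0 \<le> \<epsilon>" and K: "0 \<le> K"
    and sf: "squarefull n1" "squarefull n2" "squarefull n3"
    and lt: "n1 < n2" and ap: "n1 + n3 = 2 * n2"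
  shows "real n2 ^ 2 \<le> K * (sqrt (real (n1 * n2 * n3)) * real (n2 - n1) ^ 2) powr (1 + \<epsilon>)"
proof -
  define d where "d = int n2 - int n1"
  define P where "P = kappa (int n1 * int n3) * d ^ 2 * kappa (int n2 ^ 2)"
  have d: "0 < d" "real_of_int d = real (n2 - n1)"
    using lt ap unfolding d_def by (simp_all add: of_nat_diff)
  have pos: "0 < n1" "0 < n2" "0 < n3"
    using sf by (simp_all add: squarefull_def)
  have n3: "int n3 = 2 * int n2 - int n1"
    using ap by linarith
  have "int n1 * int n3 + d ^ 2 = int n2 ^ 2"
    unfolding d_def n3 by (simp add: power2_eq_square algebra_simps)
  then have "real n2 ^ 2 \<le> K * real_of_int P powr (1 + \<epsilon>)"
    using abc_holds_with_not_coprime[OF abc \<epsilon> K, of "int n1 * int n3" "d ^ 2"] pos d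
    unfolding P_def by simp
  also have "\<dots> \<le> K * (sqrt (real (n1 * n2 * n3)) * real (n2 - n1) ^ 2) powr (1 + \<epsilon>)"
  proof -
    have "P \<le> kappa (int n1) * kappa (int n3) * d ^ 2 * kappa (int n2)"
      unfolding P_def kappa_power2
      using kappa_mult_le[of "int n1" "int n3"] pos by (intro mult_right_mono) auto
    then have "real_of_int P \<le> real_of_int (kappa (int n1) * kappa (int n2) * kappa (int n3) * d ^ 2)"
      by (simp only: of_int_le_iff ac_simps)
    also have "\<dots> = kappa (int n1) * kappa (int n2) * kappa (int n3) * real (n2 - n1) ^ 2"
      using d by simp
    also have "\<dots> \<le> sqrt (real (n1 * n2 * n3)) * real (n2 - n1) ^ 2"
      using sf[THEN squarefull_kappa_le_sqrt]
      by (auto simp: real_sqrt_mult intro!: mult_right_mono mult_mono)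
    finally have "real_of_int P \<le> sqrt (real (n1 * n2 * n3)) * real (n2 - n1) ^ 2" .
    moreover have "0 \<le> P"
      unfolding P_def by simp
    ultimately show ?thesis
      using K \<epsilon> by (intro mult_left_mono powr_mono2) auto
  qed
  finally show ?thesis .
qed

lemma powr_39_38_le:
  fixes Q x :: real
  assumes Q: "0 \<le> Q" and x: "1 \<le> x" and Q2: "Q ^ 2 \<le> 8 * x powr (19/5)"
  shows "Q powr (1 + 1/38) \<le> 8 * x powr (39/20)"
proof -
  have "Q powr (1 + 1/38) = (Q ^ 2) powr (39/76)"
    using Q by (simp flip: powr_numeral add: powr_powr)
  also have "\<dots> \<le> (8 * x powr (19/5)) powr (39/76)"
    using Q2 by (intro powr_mono2) auto
  also have "\<dots> = 8 powr (39/76) * x powr (39/20)"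
    using x by (simp add: powr_mult powr_powr)
  also have "\<dots> \<le> 8 * x powr (39/20)"
    using powr_mono[of "39/76" 1 "8 :: real"] by (intro mult_right_mono) auto
  finally show ?thesis .
qed

lemma squarefull_progression_in_window:
  fixes n1 n2 n3 :: nat and x y K :: real
  assumes abc: "abc_holds_with (1/38) K" and K: "0 \<le> K"
    and x: "1 \<le> x" and y: "y \<le> x powr 0.2"
    and sf: "squarefull n1" "squarefull n2" "squarefull n3"
    and lt: "n1 < n2" and ap: "n1 + n3 = 2 * n2"
    and window: "x < real n1" "real n3 \<le> x + y"
  shows "x powr (1/20) < 8 * K"
proof -
  define Q where "Q = sqrt (real (n1 * n2 * n3)) * real (n2 - n1) ^ 2"
  have "y \<le> x"
    using y x powr_mono[of "0.2" 1 x] by simp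
  then have n_le_2x: "real n1 \<le> 2 * x" "real n2 \<le> 2 * x" "real n3 \<le> 2 * x"
    using window lt ap by linarith+
  have d_le: "real (n2 - n1) \<le> x powr 0.2"
    using lt ap window y by linarith
  have "Q ^ 2 = real n1 * real n2 * real n3 * real (n2 - n1) ^ 4"
    unfolding Q_def by (simp add: power_mult_distrib flip: power_mult)
  also have "\<dots> \<le> (2 * x) * (2 * x) * (2 * x) * (x powr 0.2) ^ 4"
    by (intro mult_mono power_mono) (use n_le_2x d_le x in auto)
  also have "\<dots> = 8 * (x powr 3 * x powr 0.8)"
    using x by (simp add: powr_power power3_eq_cube)
  also have "\<dots> = 8 * x powr (19/5)"
    by (simp flip: powr_add)
  finally have Q_bound: "Q powr (1 + 1/38) \<le> 8 * x powr (39/20)"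
    using x unfolding Q_def by (intro powr_39_38_le) auto
  have "x powr (1/20) * x powr (39/20) = x ^ 2"
    using x by (simp flip: powr_add powr_numeral)
  also have "\<dots> < real n2 ^ 2"
    using x window lt by (intro power_strict_mono) auto
  also have "\<dots> \<le> K * Q powr (1 + 1/38)"
    unfolding Q_def using squarefull_progression_abc_bound[OF abc _ K sf lt ap] by simp
  also have "\<dots> \<le> 8 * K * x powr (39/20)"
    using mult_left_mono[OF Q_bound K]
    by (simp add: algebra_simps)
  finally show ?thesis
    using x by simp
qed

theorem mainTheorem8:
  assumes "abc_conjecture"
  shows "\<exists>C::real. C > 0 \<and>
    (\<forall>x y :: real. x > C \<longrightarrow> 1 \<le> y \<longrightarrow> y \<le> x powr 0.2 \<longrightarrow>
      \<not> (\<exists>n1 n2 n3 :: nat. squarefull n1 \<and> squarefull n2 \<and> squarefull n3 \<and>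
            n1 < n2 \<and> n2 < n3 \<and> x < real n1 \<and> real n3 \<le> x + y \<and> n1 + n3 = 2 * n2))"
proof -
  obtain K where K: "0 < K" and abc: "abc_holds_with (1/38) K"
    using assms unfolding abc_conjecture_iff by (meson divide_pos_pos zero_less_numeral zero_less_one)
  define C where "C = max 1 ((8 * K) powr 20)"
  have large: "8 * K < x powr (1/20)" if x: "C < x" for x :: real
  proof -
    have "((8 * K) powr 20) powr (1/20) < x powr (1/20)"
      using K x by (intro powr_less_mono2) (auto simp: C_def)
    then show ?thesis
      using K by (simp only: powr_powr) simp
  qed
  show ?thesis
  proof (intro exI[of _ C] conjI allI impI notI)
    show "0 < C"
      by (simp add: C_def)
    fix x y :: real
    assume x: "C < x" and y: "y \<le> x powr 0.2"
      and "\<exists>n1 n2 n3 :: nat. squarefull n1 \<and> squarefull n2 \<and> squarefull n3 \<and>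
            n1 < n2 \<and> n2 < n3 \<and> x < real n1 \<and> real n3 \<le> x + y \<and> n1 + n3 = 2 * n2"
    then have "x powr (1/20) < 8 * K"
      using squarefull_progression_in_window[OF abc _ _ y] K x by (auto simp: C_def)
    with large[OF x] show False
      by simp
  qed
qed

end
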